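(* Let $n,g,k$ be integers with $k\ge 1$ and $2\leq g\leq \left\lfloor \frac{n-k-2}{2}\right\rfloor$, with $(n-k)g$ even. Let $F_1,F_2$ be two connected $g$-regular graphs with $|V(F_1)|+|V(F_2)|=n-k$, and let $K_{1,k-1}$ be a star with center $v$. Let $F^k_n$ be a graph obtained from the disjoint union of $F_1$, $F_2$ and $K_{1,k-1}$ by adding exactly one edge from $v$ to $F_1$ and exactly one edge from $v$ to $F_2$. Then $\kappa^g(F^k_n)=k$.
   Context: For a connected graph $G=(V,E)$ and integer $g\ge0$: a set $F\subseteq V$ is a $g$-good-neighbor faulty set if $|N(v)\cap (V-F)|\geq g$ for every $v\in V-F$; a $g$-good-neighbor cut is such an $F$ with $G-F$ disconnected; $\kappa^g(G)$ is the minimum cardinality of a $g$-good-neighbor cut. *)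

theory Defs
  imports Main "HOL-Library.Extended_Nat"
begin

definition simple_graph :: "'a set \<Rightarrow> ('a \<Rightarrow> 'a \<Rightarrow> bool) \<Rightarrow> bool" where
  "simple_graph V E \<longleftrightarrow> finite V \<and> (\<forall>x y. E x y \<longrightarrow> x \<in> V \<and> y \<in> V)
     \<and> (\<forall>x y. E x y \<longrightarrow> E y x) \<and> (\<forall>x. \<not> E x x)"

definition nbhd :: "'a set \<Rightarrow> ('a \<Rightarrow> 'a \<Rightarrow> bool) \<Rightarrow> 'a \<Rightarrow> 'a set" where
  "nbhd V E v = {u \<in> V. E v u}"

definition regular :: "'a set \<Rightarrow> ('a \<Rightarrow> 'a \<Rightarrow> bool) \<Rightarrow> nat \<Rightarrow> bool" where
  "regular V E g \<longleftrightarrow> (\<forall>v\<in>V. card (nbhd V E v) = g)"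

definition reach_in :: "'a set \<Rightarrow> ('a \<Rightarrow> 'a \<Rightarrow> bool) \<Rightarrow> 'a \<Rightarrow> 'a \<Rightarrow> bool" where
  "reach_in S E x y = (\<lambda>a b. E a b \<and> a \<in> S \<and> b \<in> S)\<^sup>*\<^sup>* x y"

definition connected_graph :: "'a set \<Rightarrow> ('a \<Rightarrow> 'a \<Rightarrow> bool) \<Rightarrow> bool" where
  "connected_graph V E \<longleftrightarrow> V \<noteq> {} \<and> (\<forall>x\<in>V. \<forall>y\<in>V. reach_in V E x y)"

definition disconnected_after :: "'a set \<Rightarrow> ('a \<Rightarrow> 'a \<Rightarrow> bool) \<Rightarrow> 'a set \<Rightarrow> bool" where
  "disconnected_after V E F \<longleftrightarrow> (\<exists>x\<in>V - F. \<exists>y\<in>V - F. \<not> reach_in (V - F) E x y)"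

definition good_neighbor_faulty :: "'a set \<Rightarrow> ('a \<Rightarrow> 'a \<Rightarrow> bool) \<Rightarrow> nat \<Rightarrow> 'a set \<Rightarrow> bool" where
  "good_neighbor_faulty V E g F \<longleftrightarrow> F \<subseteq> V \<and>
     (\<forall>v\<in>V - F. card (nbhd V E v \<inter> (V - F)) \<ge> g)"

definition good_neighbor_cut :: "'a set \<Rightarrow> ('a \<Rightarrow> 'a \<Rightarrow> bool) \<Rightarrow> nat \<Rightarrow> 'a set \<Rightarrow> bool" where
  "good_neighbor_cut V E g F \<longleftrightarrow> good_neighbor_faulty V E g F \<and> disconnected_after V E F"

text \<open>Minimum cardinality of a g-good-neighbor cut (infinity if none exists).\<close>
definition kappa_g :: "'a set \<Rightarrow> ('a \<Rightarrow> 'a \<Rightarrow> bool) \<Rightarrow> nat \<Rightarrow> enat" where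
  "kappa_g V E g = (INF F \<in> {F. good_neighbor_cut V E g F}. enat (card F))"

end

theory Submission
  imports Defs
begin

text \<open>The cut \<open>L \<union> {v}\<close> (the star) leaves the two \<open>g\<close>-regular graphs \<open>F\<^sub>1\<close>, \<open>F\<^sub>2\<close>
intact but separated, so \<open>\<kappa>\<^sup>g \<le> k\<close>. Conversely, for \<open>g \<ge> 2\<close> a leaf of the star has a
single neighbour, so every \<open>g\<close>-good-neighbor faulty set contains all \<open>k - 1\<close> leaves; if
it had fewer than \<open>k\<close> vertices it would consist of the leaves only, and then the rest of
the graph stays connected through \<open>v\<close>.\<close>

lemma reach_in_trans:
  "reach_in S E x y \<Longrightarrow> reach_in S E y z \<Longrightarrow> reach_in S E x z"
  unfolding reach_in_def by simp

lemma reach_in_edge: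
  "E x y \<Longrightarrow> x \<in> S \<Longrightarrow> y \<in> S \<Longrightarrow> reach_in S E x y"
  unfolding reach_in_def by auto

lemma reach_in_sym:
  assumes "reach_in S E x y" and "\<And>p q. E p q \<Longrightarrow> E q p"
  shows "reach_in S E y x"
proof -
  have "symp (\<lambda>p q. E p q \<and> p \<in> S \<and> q \<in> S)"
    using assms(2) by (auto simp: symp_def)
  then show ?thesis
    using assms(1) unfolding reach_in_def by (meson symp_rtranclp symp_def)
qed

lemma reach_in_mono:
  assumes "reach_in S E x y" and "S \<subseteq> T"
    and "\<And>p q. E p q \<Longrightarrow> p \<in> S \<Longrightarrow> q \<in> S \<Longrightarrow> E' p q"
  shows "reach_in T E' x y"
  using assms(1) unfolding reach_in_def
proof (induction rule: rtranclp_induct)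
  case (step y z)
  then have "E' y z \<and> y \<in> T \<and> z \<in> T"
    using assms(2,3) by blast
  then show ?case
    using step.IH by (simp add: rtranclp.rtrancl_into_rtrancl)
qed simp

lemma reach_in_closed:
  assumes "reach_in S E x y" and "x \<in> A"
    and "\<And>p q. E p q \<Longrightarrow> p \<in> S \<Longrightarrow> q \<in> S \<Longrightarrow> p \<in> A \<Longrightarrow> q \<in> A"
  shows "y \<in> A"
  using assms(1) unfolding reach_in_def
proof (induction rule: rtranclp_induct)
  case base
  then show ?case using assms(2) by simp
next
  case (step y z)
  then show ?case using assms(3) by blast
qed

lemma reach_in_hub_of_connected_subgraph:
  assumes "connected_graph W E'" and "\<And>p q. E' p q \<Longrightarrow> E p q" and "W \<subseteq> S"
    and "a \<in> W" and "E a h" and "h \<in> S" and "x \<in> W"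
  shows "reach_in S E x h"
proof -
  have "reach_in W E' x a"
    using assms(1,4,7) by (simp add: connected_graph_def)
  then have "reach_in S E x a"
    using assms(3) by (rule reach_in_mono) (rule assms(2))
  moreover have "reach_in S E a h"
    using assms(3-6) by (intro reach_in_edge) auto
  ultimately show ?thesis by (rule reach_in_trans)
qed

lemma not_disconnected_after_if_hub:
  assumes "\<And>x. x \<in> V - F \<Longrightarrow> reach_in (V - F) E x h" and "\<And>p q. E p q \<Longrightarrow> E q p"
  shows "\<not> disconnected_after V E F"
proof -
  have "reach_in (V - F) E x y" if "x \<in> V - F" "y \<in> V - F" for x y
  proof -
    have "reach_in (V - F) E h y"
      using assms(1)[OF that(2)] assms(2) by (rule reach_in_sym)
    with assms(1)[OF that(1)] show ?thesis
      by (rule reach_in_trans)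
  qed
  then show ?thesis
    unfolding disconnected_after_def by blast
qed

lemma good_neighbors_ge_of_regular_subgraph:
  assumes "regular W E' g" and "simple_graph W E'" and "finite V" and "W \<subseteq> V - F"
    and "\<And>p q. E' p q \<Longrightarrow> E p q" and "x \<in> W"
  shows "g \<le> card (nbhd V E x \<inter> (V - F))"
proof -
  have "nbhd W E' x \<subseteq> nbhd V E x \<inter> (V - F)"
    using assms(2,4,5) by (auto simp: nbhd_def simple_graph_def)
  then have "card (nbhd W E' x) \<le> card (nbhd V E x \<inter> (V - F))"
    using assms(3) by (intro card_mono) auto
  then show ?thesis
    using assms(1,6) by (simp add: regular_def)
qed

lemma mem_good_neighbor_faulty_if_degree_less:
  assumes "good_neighbor_faulty V E g F" and "finite V" and "x \<in> V"
    and "card (nbhd V E x) < g"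
  shows "x \<in> F"
proof (rule ccontr)
  assume "x \<notin> F"
  then have "g \<le> card (nbhd V E x \<inter> (V - F))"
    using assms(1,3) by (simp add: good_neighbor_faulty_def)
  also have "\<dots> \<le> card (nbhd V E x)"
    using assms(2) by (intro card_mono) (auto simp: nbhd_def)
  finally show False using assms(4) by simp
qed

lemma kappa_g_eq_enatI:
  assumes "good_neighbor_cut V E g F\<^sub>0" and "card F\<^sub>0 = k"
    and "\<And>F. good_neighbor_cut V E g F \<Longrightarrow> k \<le> card F"
  shows "kappa_g V E g = enat k"
  unfolding kappa_g_def
proof (rule antisym)
  show "(INF F \<in> {F. good_neighbor_cut V E g F}. enat (card F)) \<le> enat k"
    using assms(1,2) INF_lower[of F\<^sub>0 "{F. good_neighbor_cut V E g F}" "\<lambda>F. enat (card F)"]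
    by simp
  show "enat k \<le> (INF F \<in> {F. good_neighbor_cut V E g F}. enat (card F))"
    using assms(3) by (auto intro!: INF_greatest)
qed

text \<open>The graph \<open>F\<^sup>k\<^sub>n\<close>: \<open>L\<close> is the set of leaves of the star \<open>K\<^sub>1\<^sub>,\<^sub>k\<^sub>-\<^sub>1\<close> with centre \<open>v\<close>,
and \<open>v\<close> is joined to \<open>a \<in> V\<^sub>1\<close> and \<open>b \<in> V\<^sub>2\<close>.\<close>

locale star_join =
  fixes V\<^sub>1 V\<^sub>2 L :: "'a set" and E\<^sub>1 E\<^sub>2 :: "'a \<Rightarrow> 'a \<Rightarrow> bool" and v a b :: 'a
  assumes simple\<^sub>1: "simple_graph V\<^sub>1 E\<^sub>1" and simple\<^sub>2: "simple_graph V\<^sub>2 E\<^sub>2"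
    and disjoint: "V\<^sub>1 \<inter> V\<^sub>2 = {}" "L \<inter> V\<^sub>1 = {}" "L \<inter> V\<^sub>2 = {}"
    and centre: "v \<notin> V\<^sub>1" "v \<notin> V\<^sub>2" "v \<notin> L"
    and finite_leaves: "finite L"
    and a_in: "a \<in> V\<^sub>1" and b_in: "b \<in> V\<^sub>2"
begin

definition V :: "'a set" where
  "V = V\<^sub>1 \<union> V\<^sub>2 \<union> {v} \<union> L"

definition E :: "'a \<Rightarrow> 'a \<Rightarrow> bool" where
  "E = (\<lambda>x y. E\<^sub>1 x y \<or> E\<^sub>2 x y
          \<or> (x = v \<and> y \<in> L) \<or> (y = v \<and> x \<in> L)
          \<or> (x = v \<and> y = a) \<or> (x = a \<and> y = v)
          \<or> (x = v \<and> y = b) \<or> (x = b \<and> y = v))"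

lemma edges\<^sub>1: "E\<^sub>1 x y \<Longrightarrow> x \<in> V\<^sub>1 \<and> y \<in> V\<^sub>1 \<and> E\<^sub>1 y x"
  using simple\<^sub>1 by (auto simp: simple_graph_def)

lemma edges\<^sub>2: "E\<^sub>2 x y \<Longrightarrow> x \<in> V\<^sub>2 \<and> y \<in> V\<^sub>2 \<and> E\<^sub>2 y x"
  using simple\<^sub>2 by (auto simp: simple_graph_def)

lemma finite_V: "finite V"
  using simple\<^sub>1 simple\<^sub>2 finite_leaves by (simp add: V_def simple_graph_def)

lemma E_sym: "E x y \<Longrightarrow> E y x"
  using edges\<^sub>1 edges\<^sub>2 unfolding E_def by blast

lemma V_minus_star: "V - insert v L = V\<^sub>1 \<union> V\<^sub>2"
  using disjoint centre by (auto simp: V_def)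

lemma V_minus_leaves: "V - L = V\<^sub>1 \<union> V\<^sub>2 \<union> {v}"
  using disjoint centre by (auto simp: V_def)

lemma star_good_neighbor_cut:
  assumes "regular V\<^sub>1 E\<^sub>1 g" and "regular V\<^sub>2 E\<^sub>2 g"
  shows "good_neighbor_cut V E g (insert v L)"
  unfolding good_neighbor_cut_def good_neighbor_faulty_def
proof (intro conjI ballI)
  show "insert v L \<subseteq> V" by (auto simp: V_def)
next
  fix x assume "x \<in> V - insert v L"
  then consider "x \<in> V\<^sub>1" | "x \<in> V\<^sub>2" using V_minus_star by blast
  then show "g \<le> card (nbhd V E x \<inter> (V - insert v L))"
  proof cases
    case 1
    show ?thesis
      by (rule good_neighbors_ge_of_regular_subgraph[OF assms(1) simple\<^sub>1 finite_V _ _ 1])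
        (simp_all add: V_minus_star E_def)
  next
    case 2
    show ?thesis
      by (rule good_neighbors_ge_of_regular_subgraph[OF assms(2) simple\<^sub>2 finite_V _ _ 2])
        (simp_all add: V_minus_star E_def)
  qed
next
  have "\<not> reach_in (V\<^sub>1 \<union> V\<^sub>2) E a b"
  proof
    assume "reach_in (V\<^sub>1 \<union> V\<^sub>2) E a b"
    then have "b \<in> V\<^sub>1"
    proof (rule reach_in_closed)
      fix p q assume "E p q" "p \<in> V\<^sub>1 \<union> V\<^sub>2" "q \<in> V\<^sub>1 \<union> V\<^sub>2" "p \<in> V\<^sub>1"
      then show "q \<in> V\<^sub>1"
        using edges\<^sub>1[of p q] edges\<^sub>2[of p q] disjoint(1) centre b_in unfolding E_def by blast
    qed (rule a_in)
    then show False using b_in disjoint by auto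
  qed
  then show "disconnected_after V E (insert v L)"
    unfolding disconnected_after_def V_minus_star using a_in b_in by blast
qed

lemma leaves_subset_good_neighbor_faulty:
  assumes "2 \<le> g" and "good_neighbor_faulty V E g F"
  shows "L \<subseteq> F"
proof
  fix l assume l: "l \<in> L"
  have "l \<notin> V\<^sub>1" "l \<notin> V\<^sub>2" "l \<noteq> v"
    using l disjoint centre by auto
  then have "E l y \<Longrightarrow> y = v" for y
    using edges\<^sub>1[of l y] edges\<^sub>2[of l y] a_in b_in unfolding E_def by blast
  then have "nbhd V E l \<subseteq> {v}"
    by (auto simp: nbhd_def)
  then have "card (nbhd V E l) \<le> card {v}"
    by (rule card_mono[rotated]) simp
  then have "card (nbhd V E l) < g"
    using assms(1) by simp
  then show "l \<in> F"
    by (rule mem_good_neighbor_faulty_if_degree_less[OF assms(2) finite_V, rotated])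
      (simp add: V_def l)
qed

lemma connected_without_leaves:
  assumes "connected_graph V\<^sub>1 E\<^sub>1" and "connected_graph V\<^sub>2 E\<^sub>2"
  shows "\<not> disconnected_after V E L"
proof (rule not_disconnected_after_if_hub)
  fix x assume "x \<in> V - L"
  then consider "x \<in> V\<^sub>1" | "x \<in> V\<^sub>2" | "x = v" using V_minus_leaves by blast
  then show "reach_in (V - L) E x v"
  proof cases
    case 1
    show ?thesis
      unfolding V_minus_leaves
      by (rule reach_in_hub_of_connected_subgraph[OF assms(1) _ _ a_in _ _ 1]) (auto simp: E_def)
  next
    case 2
    show ?thesis
      unfolding V_minus_leaves
      by (rule reach_in_hub_of_connected_subgraph[OF assms(2) _ _ b_in _ _ 2]) (auto simp: E_def)
  qed (simp add: reach_in_def)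
qed (rule E_sym)

theorem kappa_g_star_join:
  assumes "2 \<le> g"
    and "connected_graph V\<^sub>1 E\<^sub>1" "regular V\<^sub>1 E\<^sub>1 g"
    and "connected_graph V\<^sub>2 E\<^sub>2" "regular V\<^sub>2 E\<^sub>2 g"
  shows "kappa_g V E g = enat (card L + 1)"
proof (rule kappa_g_eq_enatI)
  show "good_neighbor_cut V E g (insert v L)"
    using assms(3,5) by (rule star_good_neighbor_cut)
  show "card (insert v L) = card L + 1"
    using finite_leaves centre by simp
next
  fix F assume cut: "good_neighbor_cut V E g F"
  then have faulty: "good_neighbor_faulty V E g F"
    by (simp add: good_neighbor_cut_def)
  have "finite F"
    using faulty finite_subset[OF _ finite_V] by (simp add: good_neighbor_faulty_def)
  moreover have "L \<subset> F"
  proof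
    show "L \<subseteq> F"
      using assms(1) faulty by (rule leaves_subset_good_neighbor_faulty)
    show "L \<noteq> F"
      using cut connected_without_leaves[OF assms(2,4)] by (auto simp: good_neighbor_cut_def)
  qed
  ultimately show "card L + 1 \<le> card F"
    by (simp add: psubset_card_mono Suc_leI)
qed

end

theorem lemma4p1:
  fixes n g k :: nat
    and V1 V2 L :: "'a set" and E1 E2 :: "'a \<Rightarrow> 'a \<Rightarrow> bool"
    and v a b :: 'a
  assumes "k \<ge> 1"
    and "2 \<le> g" and "int g \<le> (int n - int k - 2) div 2"
    and "even ((int n - int k) * int g)"
    and "simple_graph V1 E1" and "connected_graph V1 E1" and "regular V1 E1 g"
    and "simple_graph V2 E2" and "connected_graph V2 E2" and "regular V2 E2 g"
    and "int (card V1 + card V2) = int n - int k"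
    and "V1 \<inter> V2 = {}"
    and "finite L" and "card L = k - 1"
    and "v \<notin> V1" and "v \<notin> V2" and "v \<notin> L"
    and "L \<inter> V1 = {}" and "L \<inter> V2 = {}"
    and "a \<in> V1" and "b \<in> V2"
  shows "kappa_g (V1 \<union> V2 \<union> {v} \<union> L)
           (\<lambda>x y. E1 x y \<or> E2 x y
                  \<or> (x = v \<and> y \<in> L) \<or> (y = v \<and> x \<in> L)
                  \<or> (x = v \<and> y = a) \<or> (x = a \<and> y = v)
                  \<or> (x = v \<and> y = b) \<or> (x = b \<and> y = v))
           g = enat k"
proof -
  interpret star_join V1 V2 L E1 E2 v a b
    using assms(5,8,12-21) by unfold_locales
  have "kappa_g V E g = enat (card L + 1)"
    using assms(2,6,7,9,10) by (rule kappa_g_star_join)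
  then show ?thesis
    using assms(1,14) by (simp add: V_def E_def)
qed

end
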